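(* Let $M_1$ and $M_2$ be matroids on disjoint ground sets $E_1$ and $E_2$, of ranks $r_1$ and $r_2$. Let $\mathcal{A}\subseteq\mathcal{B}(M_1\oplus M_2)$ be nonempty. Then $\mathcal{A}$ is the collection of bases of a matroid on $E_1\cup E_2$ if and only if $\mathcal{A}=\{X\cup Y : X\in\mathcal{A}_1,\ Y\in\mathcal{A}_2\}$ for some $\mathcal{A}_1\subseteq\mathcal{B}(M_1)$ and $\mathcal{A}_2\subseteq\mathcal{B}(M_2)$ which are collections of bases of matroids (on $E_1$ and $E_2$ respectively).
   Context: The direct sum $M_1\oplus M_2$ of matroids on disjoint ground sets $E_1,E_2$ is the matroid on $E_1\cup E_2$ with bases $\{B_1\cup B_2: B_1\in\mathcal{B}(M_1),\ B_2\in\mathcal{B}(M_2)\}$; it has rank $r_1+r_2$. *)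

theory Defs
  imports Main
begin

definition matroid_bases :: "'a set \<Rightarrow> 'a set set \<Rightarrow> bool" where
  "matroid_bases E \<B> \<longleftrightarrow>
     finite E \<and> \<B> \<noteq> {} \<and> (\<forall>X\<in>\<B>. X \<subseteq> E) \<and>
     (\<forall>X\<in>\<B>. \<forall>Y\<in>\<B>. \<forall>x\<in>X - Y. \<exists>y\<in>Y - X. insert y (X - {x}) \<in> \<B>)"

definition sum_bases :: "'a set set \<Rightarrow> 'a set set \<Rightarrow> 'a set set" where
  "sum_bases \<B>1 \<B>2 = {X \<union> Y | X Y. X \<in> \<B>1 \<and> Y \<in> \<B>2}"

end

theory Submission
  imports Defs
begin

(* The direction "<==" is the direct-sum construction: unions of a
   basis of each of two matroids on disjoint ground sets form the bases of a
   matroid, because an exchange inside one summand leaves the other untouched.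
   For "==>", let A be the bases of a matroid on E1 \<union> E2 all of whose members
   meet E1 and E2 in bases of M1 and M2.  The only property of this hypothesis
   that is used is that the traces {Z \<inter> Ei | Z \<in> A} are clutters (no member
   contains another), which holds since bases of a matroid form a clutter.
   For such a side, a basis exchange that removes an element of Ei must insert
   an element of Ei again.  Consequently (1) each trace is itself the set of
   bases of a matroid on Ei, and (2) A is closed under mixing, i.e. for
   X, Y \<in> A also (X \<inter> E1) \<union> (Y \<inter> E2) \<in> A, proved by pushing X towards Y
   inside E2 one exchange at a time.  (2) shows that A is the direct sum of
   its two traces, which gives the theorem. *)

definition clutter :: "'a set set \<Rightarrow> bool" where
  "clutter \<C> \<longleftrightarrow> (\<forall>X\<in>\<C>. \<forall>Y\<in>\<C>. X \<subseteq> Y \<longrightarrow> X = Y)"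

definition trace_on :: "'a set set \<Rightarrow> 'a set \<Rightarrow> 'a set set" where
  "trace_on \<A> F = (\<lambda>Z. Z \<inter> F) ` \<A>"

lemma clutter_subset: "clutter \<C> \<Longrightarrow> \<D> \<subseteq> \<C> \<Longrightarrow> clutter \<D>"
  unfolding clutter_def by blast

text \<open>The bases of a matroid form a clutter: if X \<subset> Y, an element of Y - X
  could only be exchanged against an element of X - Y = {}.\<close>
lemma matroid_bases_clutter:
  assumes "matroid_bases E \<B>"
  shows "clutter \<B>"
  unfolding clutter_def
proof (intro ballI impI)
  fix X Y assume X: "X \<in> \<B>" and Y: "Y \<in> \<B>" and "X \<subseteq> Y"
  show "X = Y"
  proof (rule ccontr)
    assume "X \<noteq> Y"
    then obtain x where "x \<in> Y - X" using \<open>X \<subseteq> Y\<close> by blast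
    then obtain y where "y \<in> X - Y" using assms X Y unfolding matroid_bases_def by blast
    then show False using \<open>X \<subseteq> Y\<close> by blast
  qed
qed

lemma sum_bases_split:
  assumes "matroid_bases E1 \<B>1" "matroid_bases E2 \<B>2" "E1 \<inter> E2 = {}"
    and "Z \<in> sum_bases \<B>1 \<B>2"
  shows "Z \<inter> E1 \<in> \<B>1" "Z \<inter> E2 \<in> \<B>2"
proof -
  obtain X Y where Z: "Z = X \<union> Y" "X \<in> \<B>1" "Y \<in> \<B>2"
    using assms(4) unfolding sum_bases_def by blast
  moreover have "X \<subseteq> E1" "Y \<subseteq> E2"
    using assms(1,2) Z unfolding matroid_bases_def by auto
  ultimately have "Z \<inter> E1 = X" "Z \<inter> E2 = Y" using assms(3) by auto
  then show "Z \<inter> E1 \<in> \<B>1" "Z \<inter> E2 \<in> \<B>2" using Z by simp_all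
qed

lemma trace_on_sum_bases:
  assumes "matroid_bases E1 \<B>1" "matroid_bases E2 \<B>2" "E1 \<inter> E2 = {}"
    and "\<A> \<subseteq> sum_bases \<B>1 \<B>2"
  shows "trace_on \<A> E1 \<subseteq> \<B>1" "trace_on \<A> E2 \<subseteq> \<B>2"
  using sum_bases_split[OF assms(1-3)] assms(4) unfolding trace_on_def by blast+

lemma clutter_trace_eq:
  assumes "clutter (trace_on \<A> F)" "X \<in> \<A>" "Y \<in> \<A>" "X \<inter> F \<subseteq> Y \<inter> F"
  shows "X \<inter> F = Y \<inter> F"
proof -
  have "X \<inter> F \<in> trace_on \<A> F" "Y \<inter> F \<in> trace_on \<A> F"
    using assms(2,3) unfolding trace_on_def by blast+
  then show ?thesis using assms(1,4) unfolding clutter_def by blast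
qed

text \<open>If the trace of the bases on F is a clutter, then exchanging out an element
  of F forces an element of F to come in (otherwise the trace would shrink).\<close>
lemma exchange_within_side:
  assumes M: "matroid_bases E \<A>" and C: "clutter (trace_on \<A> F)"
    and X: "X \<in> \<A>" and Y: "Y \<in> \<A>" and x: "x \<in> X - Y" "x \<in> F"
  shows "\<exists>y\<in>Y - X. y \<in> F \<and> insert y (X - {x}) \<in> \<A>"
proof -
  obtain y where y: "y \<in> Y - X" and Z: "insert y (X - {x}) \<in> \<A>"
    using M X Y x(1) unfolding matroid_bases_def by blast
  have "y \<in> F"
  proof (rule ccontr)
    assume "y \<notin> F"
    then have "insert y (X - {x}) \<inter> F \<subseteq> X \<inter> F" by auto
    then have "insert y (X - {x}) \<inter> F = X \<inter> F"
      using clutter_trace_eq[OF C Z X] by blast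
    moreover have "x \<noteq> y" using x y by blast
    ultimately show False using x by blast
  qed
  then show ?thesis using y Z by blast
qed

lemma trace_on_matroid_bases:
  assumes M: "matroid_bases E \<A>" and C: "clutter (trace_on \<A> F)" and "F \<subseteq> E"
  shows "matroid_bases F (trace_on \<A> F)"
  unfolding matroid_bases_def
proof (intro conjI ballI)
  show "finite F" using M \<open>F \<subseteq> E\<close> finite_subset unfolding matroid_bases_def by blast
  show "trace_on \<A> F \<noteq> {}" using M unfolding matroid_bases_def trace_on_def by blast
  show "X' \<subseteq> F" if "X' \<in> trace_on \<A> F" for X' using that unfolding trace_on_def by blast
  fix X' Y' x assume "X' \<in> trace_on \<A> F" "Y' \<in> trace_on \<A> F" and x: "x \<in> X' - Y'"
  then obtain X Y where XY: "X \<in> \<A>" "Y \<in> \<A>" "X' = X \<inter> F" "Y' = Y \<inter> F"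
    unfolding trace_on_def by blast
  then obtain y where y: "y \<in> Y - X" "y \<in> F" and Z: "insert y (X - {x}) \<in> \<A>"
    using exchange_within_side[OF M C, of X Y x] x by blast
  have "insert y (X' - {x}) = insert y (X - {x}) \<inter> F" using XY y by blast
  then have "insert y (X' - {x}) \<in> trace_on \<A> F" using Z unfolding trace_on_def by blast
  moreover have "y \<in> Y' - X'" using XY y by blast
  ultimately show "\<exists>y\<in>Y' - X'. insert y (X' - {x}) \<in> trace_on \<A> F" by blast
qed

text \<open>Induction on the number of elements of Z \<inter> E2
  outside Y; each exchange stays inside E2 and so keeps Z \<inter> E1 fixed.\<close>
lemma mix_bases:
  assumes M: "matroid_bases (E1 \<union> E2) \<A>" and "E1 \<inter> E2 = {}"
    and C: "clutter (trace_on \<A> E2)"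
    and Z: "Z \<in> \<A>" and Y: "Y \<in> \<A>"
  shows "(Z \<inter> E1) \<union> (Y \<inter> E2) \<in> \<A>"
  using Z
proof (induction "card (Z \<inter> E2 - Y)" arbitrary: Z rule: less_induct)
  case less
  have "Z \<subseteq> E1 \<union> E2" using M less.prems unfolding matroid_bases_def by blast
  then have Z_split: "Z = (Z \<inter> E1) \<union> (Z \<inter> E2)" by blast
  show ?case
  proof (cases "Z \<inter> E2 \<subseteq> Y")
    case True
    then have "Z \<inter> E2 = Y \<inter> E2" using clutter_trace_eq[OF C less.prems Y] by blast
    then show ?thesis using Z_split less.prems by simp
  next
    case False
    then obtain x where x: "x \<in> Z - Y" "x \<in> E2" by blast
    then obtain y where y: "y \<in> Y - Z" "y \<in> E2" and Z': "insert y (Z - {x}) \<in> \<A>"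
      using exchange_within_side[OF M C less.prems Y] by blast
    have "x \<notin> E1" "y \<notin> E1" using x(2) y(2) \<open>E1 \<inter> E2 = {}\<close> by blast+
    then have same_E1: "insert y (Z - {x}) \<inter> E1 = Z \<inter> E1" by blast
    have "finite E2" using M unfolding matroid_bases_def by simp
    then have "finite (Z \<inter> E2 - Y)" by simp
    moreover have "insert y (Z - {x}) \<inter> E2 - Y = (Z \<inter> E2 - Y) - {x}" using y by blast
    moreover have "x \<in> Z \<inter> E2 - Y" using x by blast
    ultimately have "card (insert y (Z - {x}) \<inter> E2 - Y) < card (Z \<inter> E2 - Y)"
      by (simp only: card_Diff1_less)
    from less.hyps[OF this Z'] show ?thesis unfolding same_E1 .
  qed
qed

lemma sum_bases_of_traces:
  assumes M: "matroid_bases (E1 \<union> E2) \<A>" and "E1 \<inter> E2 = {}"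
    and C: "clutter (trace_on \<A> E2)"
  shows "\<A> = sum_bases (trace_on \<A> E1) (trace_on \<A> E2)"
proof
  show "\<A> \<subseteq> sum_bases (trace_on \<A> E1) (trace_on \<A> E2)"
  proof
    fix Z assume "Z \<in> \<A>"
    moreover have "Z = (Z \<inter> E1) \<union> (Z \<inter> E2)"
      using M \<open>Z \<in> \<A>\<close> unfolding matroid_bases_def by blast
    ultimately show "Z \<in> sum_bases (trace_on \<A> E1) (trace_on \<A> E2)"
      unfolding sum_bases_def trace_on_def by blast
  qed
  show "sum_bases (trace_on \<A> E1) (trace_on \<A> E2) \<subseteq> \<A>"
    using mix_bases[OF assms] unfolding sum_bases_def trace_on_def by blast
qed

text \<open>The direct sum is symmetric, so one exchange case suffices.\<close>
lemma sum_bases_commute: "sum_bases \<B>1 \<B>2 = sum_bases \<B>2 \<B>1"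
  unfolding sum_bases_def by blast

lemma sum_bases_exchange:
  assumes M1: "matroid_bases E1 \<B>1" and M2: "matroid_bases E2 \<B>2" and "E1 \<inter> E2 = {}"
    and X: "X1 \<in> \<B>1" "X2 \<in> \<B>2" and Y: "Y1 \<in> \<B>1" "Y2 \<in> \<B>2" and x: "x \<in> X1 - Y1"
  shows "\<exists>y\<in>(Y1 \<union> Y2) - (X1 \<union> X2). insert y ((X1 \<union> X2) - {x}) \<in> sum_bases \<B>1 \<B>2"
proof -
  obtain y where y: "y \<in> Y1 - X1" and new: "insert y (X1 - {x}) \<in> \<B>1"
    using M1 X Y x unfolding matroid_bases_def by blast
  have "X1 \<subseteq> E1" "Y1 \<subseteq> E1" "X2 \<subseteq> E2"
    using M1 M2 X Y unfolding matroid_bases_def by auto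
  then have "x \<notin> X2" "y \<notin> X2" using x y \<open>E1 \<inter> E2 = {}\<close> by blast+
  then have "insert y ((X1 \<union> X2) - {x}) = insert y (X1 - {x}) \<union> X2" by blast
  then have "insert y ((X1 \<union> X2) - {x}) \<in> sum_bases \<B>1 \<B>2"
    using new X unfolding sum_bases_def by blast
  moreover have "y \<in> (Y1 \<union> Y2) - (X1 \<union> X2)" using y \<open>y \<notin> X2\<close> by blast
  ultimately show ?thesis by blast
qed

lemma direct_sum_exchange:
  assumes M1: "matroid_bases E1 \<B>1" and M2: "matroid_bases E2 \<B>2" and "E1 \<inter> E2 = {}"
    and "X \<in> sum_bases \<B>1 \<B>2" "Y \<in> sum_bases \<B>1 \<B>2" and x: "x \<in> X - Y"
  shows "\<exists>y\<in>Y - X. insert y (X - {x}) \<in> sum_bases \<B>1 \<B>2"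
proof -
  obtain X1 X2 Y1 Y2 where XY: "X = X1 \<union> X2" "Y = Y1 \<union> Y2"
    and mem: "X1 \<in> \<B>1" "X2 \<in> \<B>2" "Y1 \<in> \<B>1" "Y2 \<in> \<B>2"
    using assms(4,5) unfolding sum_bases_def by blast
  have disj: "E2 \<inter> E1 = {}" using \<open>E1 \<inter> E2 = {}\<close> by blast
  show ?thesis
  proof (cases "x \<in> X1")
    case True
    then have "x \<in> X1 - Y1" using x XY by blast
    then show ?thesis
      unfolding XY by (rule sum_bases_exchange[OF M1 M2 \<open>E1 \<inter> E2 = {}\<close> mem])
  next
    case False
    then have "x \<in> X2 - Y2" using x XY by blast
    then have "\<exists>y\<in>(Y2 \<union> Y1) - (X2 \<union> X1). insert y ((X2 \<union> X1) - {x}) \<in> sum_bases \<B>2 \<B>1"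
      by (rule sum_bases_exchange[OF M2 M1 disj mem(2,1,4,3)])
    then show ?thesis
      unfolding XY by (simp only: Un_commute[of X2 X1] Un_commute[of Y2 Y1] sum_bases_commute[of \<B>2 \<B>1])
  qed
qed

lemma direct_sum_matroid_bases:
  assumes M1: "matroid_bases E1 \<B>1" and M2: "matroid_bases E2 \<B>2" and "E1 \<inter> E2 = {}"
  shows "matroid_bases (E1 \<union> E2) (sum_bases \<B>1 \<B>2)"
proof -
  have sub1: "\<And>X. X \<in> \<B>1 \<Longrightarrow> X \<subseteq> E1" and sub2: "\<And>X. X \<in> \<B>2 \<Longrightarrow> X \<subseteq> E2"
    using M1 M2 unfolding matroid_bases_def by blast+
  have "\<B>1 \<noteq> {}" "\<B>2 \<noteq> {}" using M1 M2 unfolding matroid_bases_def by blast+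
  then have nonempty: "sum_bases \<B>1 \<B>2 \<noteq> {}" unfolding sum_bases_def by blast
  have "finite E1" "finite E2" using M1 M2 unfolding matroid_bases_def by blast+
  moreover have "X \<subseteq> E1 \<union> E2" if "X \<in> sum_bases \<B>1 \<B>2" for X
    using that sub1 sub2 unfolding sum_bases_def by blast
  moreover have "\<exists>y\<in>Y - X. insert y (X - {x}) \<in> sum_bases \<B>1 \<B>2"
    if "X \<in> sum_bases \<B>1 \<B>2" "Y \<in> sum_bases \<B>1 \<B>2" "x \<in> X - Y" for X Y x
    using that by (rule direct_sum_exchange[OF M1 M2 \<open>E1 \<inter> E2 = {}\<close>])
  ultimately show ?thesis using nonempty unfolding matroid_bases_def by blast
qed

theorem lemma2:
  fixes E1 E2 :: "'a set" and \<B>1 \<B>2 \<A> :: "'a set set"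
  assumes "matroid_bases E1 \<B>1" and "matroid_bases E2 \<B>2"
    and "E1 \<inter> E2 = {}"
    and "\<A> \<subseteq> sum_bases \<B>1 \<B>2" and "\<A> \<noteq> {}"
  shows "matroid_bases (E1 \<union> E2) \<A> \<longleftrightarrow>
    (\<exists>\<A>1 \<A>2. \<A>1 \<subseteq> \<B>1 \<and> \<A>2 \<subseteq> \<B>2 \<and>
       matroid_bases E1 \<A>1 \<and> matroid_bases E2 \<A>2 \<and>
       \<A> = sum_bases \<A>1 \<A>2)"
proof
  assume M: "matroid_bases (E1 \<union> E2) \<A>"
  have sub: "trace_on \<A> E1 \<subseteq> \<B>1" "trace_on \<A> E2 \<subseteq> \<B>2"
    using trace_on_sum_bases[OF assms(1-4)] by simp_all
  have C1: "clutter (trace_on \<A> E1)" and C2: "clutter (trace_on \<A> E2)"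
    using sub matroid_bases_clutter[OF assms(1)] matroid_bases_clutter[OF assms(2)]
    by (blast intro: clutter_subset)+
  have "matroid_bases E1 (trace_on \<A> E1)" "matroid_bases E2 (trace_on \<A> E2)"
    using trace_on_matroid_bases[OF M C1] trace_on_matroid_bases[OF M C2] by simp_all
  moreover have "\<A> = sum_bases (trace_on \<A> E1) (trace_on \<A> E2)"
    using sum_bases_of_traces[OF M assms(3) C2] .
  ultimately show "\<exists>\<A>1 \<A>2. \<A>1 \<subseteq> \<B>1 \<and> \<A>2 \<subseteq> \<B>2 \<and>
       matroid_bases E1 \<A>1 \<and> matroid_bases E2 \<A>2 \<and> \<A> = sum_bases \<A>1 \<A>2"
    using sub by blast
next
  assume "\<exists>\<A>1 \<A>2. \<A>1 \<subseteq> \<B>1 \<and> \<A>2 \<subseteq> \<B>2 \<and>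
       matroid_bases E1 \<A>1 \<and> matroid_bases E2 \<A>2 \<and> \<A> = sum_bases \<A>1 \<A>2"
  then show "matroid_bases (E1 \<union> E2) \<A>"
    using direct_sum_matroid_bases[OF _ _ assms(3)] by blast
qed

end
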